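(* Let $r\ge1$ and let $\tau$ be a permutation of $F^r$ fixing $\mathbf 0$. The groups $\mathrm{PAut}(S_\tau)$ and $\mathrm{Aut}(SQS_\tau)$ are isomorphic.
   Context: $F=\mathrm{GF}(2)$, $\mathbf 0$ is the all-zero vector. Index the coordinates of $F^{2^r}$ by the vectors of $F^r$; $e_a$ is the unit vector with a single $1$ at position $a$. The extended Hamming code is $\mathcal H=\{x\in F^{2^r}:\sum_{a:x_a=1}a=\mathbf 0,\ \mathrm{wt}(x)\text{ even}\}$. For $x,y\in F^{2^r}$, $x|y$ is the concatenation and $C\times D=\{x|y:x\in C,y\in D\}$. Define $S_\tau=\bigcup_{a\in F^r}(\mathcal H+e_a+e_{\mathbf 0})\times(\mathcal H+e_{\tau(a)}+e_{\tau(\mathbf 0)})\subseteq F^{2^{r+1}}$. $\mathrm{PAut}(S_\tau)$ is the group of permutations $\pi$ of the coordinate positions with $\pi(S_\tau)=S_\tau$ (where $\pi(y)_i=y_{\pi^{-1}(i)}$). The coordinate positions of $F^{2^{r+1}}$ are denoted $(\{a\},\emptyset)$ (position $a$ in the first half) and $(\emptyset,\{a\})$ (second half). $SQS_\tau$ is the Steiner quadruple system on these positions consisting of $Q_0=\{(\{a,b,c,d\},\emptyset): a,b,c,d \text{ pairwise distinct}, a+b+c+d=\mathbf 0\}$, $Q_1=\{(\emptyset,\{a,b,c,d\}): a,b,c,d \text{ pairwise distinct}, a+b+c+d=\mathbf 0\}$ and $Q_\tau=\{(\{a,c\},\{b,d\}):\tau(a+c)=b+d\neq\mathbf 0\}$,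 where $(X,Y)$ denotes the set of positions $\{(\{x\},\emptyset):x\in X\}\cup\{(\emptyset,\{y\}):y\in Y\}$. $\mathrm{Aut}(SQS_\tau)$ is the group of permutations of positions preserving the set of quadruples. *)

theory Defs
  imports "HOL-Algebra.Bij" "HOL-Algebra.Group"
begin

text \<open>Vectors of F^r, F = GF(2), are modelled as functions from a finite type 'r
  with r = CARD('r) elements into bool (addition = pointwise exclusive or).
  A binary word of length 2^r indexed by F^r is identified with its support,
  a set of vectors.  Positions of F^(2^(r+1)) are Inl a (first half) and Inr a
  (second half).\<close>

type_synonym 'r vec = "'r \<Rightarrow> bool"

definition vzero :: "'r vec" where
  "vzero = (\<lambda>_. False)"

definition vadd :: "'r vec \<Rightarrow> 'r vec \<Rightarrow> 'r vec" where
  "vadd u v = (\<lambda>i. u i \<noteq> v i)"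

definition vsum :: "'r vec set \<Rightarrow> 'r vec" where
  "vsum X = (\<lambda>i. odd (card {a \<in> X. a i}))"

definition ext_hamming :: "('r::finite) vec set set" where
  "ext_hamming = {X. vsum X = vzero \<and> even (card X)}"

text \<open>Adding the unit vector e_a to a word: flip position a.\<close>
definition flip :: "'a set \<Rightarrow> 'a \<Rightarrow> 'a set" where
  "flip X a = (if a \<in> X then X - {a} else insert a X)"

definition cat :: "'a set \<Rightarrow> 'a set \<Rightarrow> ('a + 'a) set" where
  "cat X Y = Inl ` X \<union> Inr ` Y"

definition S_tau :: "(('r::finite) vec \<Rightarrow> 'r vec) \<Rightarrow> ('r vec + 'r vec) set set" where
  "S_tau \<tau> = (\<Union>a. {cat (flip (flip X a) vzero) (flip (flip Y (\<tau> a)) (\<tau> vzero)) | X Y.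
                      X \<in> ext_hamming \<and> Y \<in> ext_hamming})"

definition SQS_tau :: "(('r::finite) vec \<Rightarrow> 'r vec) \<Rightarrow> ('r vec + 'r vec) set set" where
  "SQS_tau \<tau> =
     {Inl ` {a, b, c, d} | a b c d. distinct [a, b, c, d] \<and> vadd (vadd a b) (vadd c d) = vzero}
   \<union> {Inr ` {a, b, c, d} | a b c d. distinct [a, b, c, d] \<and> vadd (vadd a b) (vadd c d) = vzero}
   \<union> {Inl ` {a, c} \<union> Inr ` {b, d} | a b c d. \<tau> (vadd a c) = vadd b d \<and> vadd b d \<noteq> vzero}"

text \<open>For a code
  (family of supports) this is the permutation automorphism group, since the
  support of pi(y) is the image under pi of the support of y; for a block design
  it is the automorphism group.\<close>
definition stab_group :: "'p set set \<Rightarrow> ('p \<Rightarrow> 'p) monoid" where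
  "stab_group B = (BijGroup UNIV)\<lparr>carrier := {\<pi> \<in> Bij UNIV. (\<lambda>Y. \<pi> ` Y) ` B = B}\<rparr>"

definition PAut :: "'p set set \<Rightarrow> ('p \<Rightarrow> 'p) monoid" where
  "PAut C = stab_group C"

definition Aut_design :: "'p set set \<Rightarrow> ('p \<Rightarrow> 'p) monoid" where
  "Aut_design Q = stab_group Q"

end

theory Submission
  imports Defs
begin

(* Write a word of length 2^(r+1) as x|y and let s(x) be the sum of the support of x.
  Unfolding the cosets of the extended Hamming code, S_tau consists of the words whose two
  halves have even weight and satisfy s(y) = tau(s(x)), and its words of weight 4 are exactly
  the blocks of SQS_tau.  So every permutation automorphism of S_tau is an automorphism of
  SQS_tau, and both groups are the same subgroup of the symmetric group once the converse holds.

  Conversely, let pi be an automorphism of SQS_tau.  A word of S_tau that is neither empty nor a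
  block has three points in one half, which lie in a block B inside that half; adding B shortens
  the word and stays in S_tau.  By induction it suffices that adding pi(B) preserves S_tau.  If
  tau is additive, S_tau is linear and this is clear.  Otherwise the design recognises the halves:
  call a pair of points closing if for any two blocks through it the remaining four points form
  a block.  Pairs inside a half are closing, pairs across the halves are not, and automorphisms
  preserve closing pairs, so pi(B) again lies inside one half. *)

lemma card_sym_diff:
  assumes "finite A" "finite B"
  shows "card (sym_diff A B) + 2 * card (A \<inter> B) = card A + card B"
proof -
  have "sym_diff A B = (A \<union> B) - (A \<inter> B)" by blast
  moreover have "card ((A \<union> B) - (A \<inter> B)) = card (A \<union> B) - card (A \<inter> B)"
    using assms by (intro card_Diff_subset) auto
  moreover have "card (A \<inter> B) \<le> card (A \<union> B)" using assms by (intro card_mono) auto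
  ultimately show ?thesis using card_Un_Int[OF assms] by simp
qed

lemma even_card_sym_diff:
  "finite A \<Longrightarrow> finite B \<Longrightarrow> even (card (sym_diff A B)) \<longleftrightarrow> (even (card A) \<longleftrightarrow> even (card B))"
  using card_sym_diff[of A B] by presburger

lemma card_sym_diff_less:
  assumes "finite W" "card B = 4" "3 \<le> card (W \<inter> B)"
  shows "card (sym_diff W B) < card W"
  using card_sym_diff[of W B] assms card.infinite[of B] by fastforce

lemma card_4_iff: "card S = 4 \<longleftrightarrow> (\<exists>a b c d. S = {a, b, c, d} \<and> distinct [a, b, c, d])"
proof
  assume "card S = 4"
  then obtain a T where "S = insert a T" "a \<notin> T" "card T = 3"
    using card_eq_SucD[of S 3] by auto
  then show "\<exists>a b c d. S = {a, b, c, d} \<and> distinct [a, b, c, d]"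
    by (auto simp: card_3_iff)
next
  assume "\<exists>a b c d. S = {a, b, c, d} \<and> distinct [a, b, c, d]"
  then show "card S = 4" by auto
qed

lemma card_insert4_eq_4_iff: "card {a, b, c, d} = 4 \<longleftrightarrow> distinct [a, b, c, d]"
  by (auto simp: card_insert_if)

lemma doubleton_eq_if_card_2:
  assumes "finite X" "card X = 2" "a \<in> X" "c \<in> X" "a \<noteq> c"
  shows "X = {a, c}"
  using assms card_subset_eq[of X "{a, c}"] by simp

section \<open>Binary vectors\<close>

lemma vadd_comm: "vadd a b = vadd b a"
  by (auto simp: vadd_def)

lemma vadd_assoc: "vadd (vadd a b) c = vadd a (vadd b c)"
  by (auto simp: vadd_def)

lemma vadd_left_comm: "vadd a (vadd b c) = vadd b (vadd a c)"
  by (auto simp: vadd_def)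

lemmas vadd_ac = vadd_assoc vadd_comm vadd_left_comm

lemma vadd_self [simp]: "vadd a a = vzero"
  by (simp add: vadd_def vzero_def)

lemma vadd_self_left [simp]: "vadd a (vadd a b) = b"
  by (auto simp: vadd_def)

lemma vadd_vzero [simp]: "vadd a vzero = a" "vadd vzero a = a"
  by (simp_all add: vadd_def vzero_def)

lemma vadd_eq_vzero_iff [simp]: "vadd a b = vzero \<longleftrightarrow> a = b"
  by (auto simp: vadd_def vzero_def fun_eq_iff)

lemma vzero_eq_vadd_iff [simp]: "vzero = vadd a b \<longleftrightarrow> a = b"
  by (auto simp: vadd_def vzero_def fun_eq_iff)

lemma vadd_left_cancel [simp]: "vadd a b = vadd a c \<longleftrightarrow> b = c"
  by (auto simp: vadd_def fun_eq_iff)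

lemma vadd_eq_left_iff [simp]: "vadd a b = a \<longleftrightarrow> b = vzero"
  by (auto simp: vadd_def vzero_def fun_eq_iff)

lemma left_eq_vadd_iff [simp]: "a = vadd a b \<longleftrightarrow> b = vzero"
  by (auto simp: vadd_def vzero_def fun_eq_iff)

definition vadditive :: "('r vec \<Rightarrow> 's vec) \<Rightarrow> bool" where
  "vadditive f \<longleftrightarrow> (\<forall>x y. f (vadd x y) = vadd (f x) (f y))"

lemma vsum_empty [simp]: "vsum {} = vzero"
  by (simp add: vsum_def vzero_def)

lemma vsum_insert:
  assumes "finite A" "x \<notin> A"
  shows "vsum (insert x A) = vadd x (vsum A)"
  unfolding vsum_def vadd_def
proof
  fix i
  have "{a \<in> insert x A. a i} = (if x i then insert x {a \<in> A. a i} else {a \<in> A. a i})"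
    by auto
  then show "odd (card {a \<in> insert x A. a i}) \<longleftrightarrow> x i \<noteq> odd (card {a \<in> A. a i})"
    using assms by simp
qed

lemma vsum_doubleton: "a \<noteq> b \<Longrightarrow> vsum {a, b} = vadd a b"
  by (simp add: vsum_insert)

lemma vsum_sym_diff:
  assumes "finite A" "finite B"
  shows "vsum (sym_diff A B) = vadd (vsum A) (vsum B)"
  unfolding vsum_def vadd_def
proof
  fix i
  have "{a \<in> sym_diff A B. a i} = sym_diff {a \<in> A. a i} {a \<in> B. a i}"
    by blast
  then show "odd (card {a \<in> sym_diff A B. a i}) \<longleftrightarrow> odd (card {a \<in> A. a i}) \<noteq> odd (card {a \<in> B. a i})"
    using even_card_sym_diff[of "{a \<in> A. a i}" "{a \<in> B. a i}"] assms by simp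
qed

lemma flip_eq_sym_diff: "flip X a = sym_diff X {a}"
  by (auto simp: flip_def)

lemma vsum_flip: "finite X \<Longrightarrow> vsum (flip X a) = vadd (vsum X) a"
  by (simp add: flip_eq_sym_diff vsum_sym_diff vsum_insert)

lemma even_card_flip: "finite X \<Longrightarrow> even (card (flip X a)) \<longleftrightarrow> odd (card X)"
  by (simp add: flip_eq_sym_diff even_card_sym_diff)

lemma flip_flip [simp]: "flip (flip X a) a = X"
  by (auto simp: flip_def)

lemma vsum_eq_vzero_iff_empty:
  assumes "finite X" "even (card X)" "card X < 3"
  shows "vsum X = vzero \<longleftrightarrow> X = {}"
proof -
  have "card X = 0 \<or> card X = 2" using assms by presburger
  then show ?thesis
    using assms(1) by (auto simp: card_2_iff vsum_doubleton)
qed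

lemma exists_zero_sum_quadruple:
  fixes X :: "'r vec set"
  assumes "3 \<le> card X"
  obtains Q where "card Q = 4" "vsum Q = vzero" "3 \<le> card (X \<inter> Q)"
proof -
  obtain T where "T \<subseteq> X" "card T = 3"
    using obtain_subset_with_card_n[OF assms] by metis
  then obtain a b c where abc: "{a, b, c} \<subseteq> X" "distinct [a, b, c]"
    by (auto simp: card_3_iff)
  define d where "d = vadd a (vadd b c)"
  have "vadd a d = vadd b c" "vadd b d = vadd a c" "vadd c d = vadd a b"
    by (simp_all add: d_def vadd_ac)
  then have "distinct [a, b, c, d]"
    using abc by auto
  moreover have "vsum {a, b, c, d} = vzero"
    using \<open>distinct [a, b, c, d]\<close> by (simp add: vsum_insert d_def vadd_ac)
  moreover have "{a, b, c} \<subseteq> X \<inter> {a, b, c, d}" using abc by auto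
  then have "3 \<le> card (X \<inter> {a, b, c, d})"
    using abc card_mono[of "X \<inter> {a, b, c, d}" "{a, b, c}"] by auto
  ultimately show ?thesis by (intro that) auto
qed

section \<open>Words on two halves\<close>

definition lpart :: "('a + 'b) set \<Rightarrow> 'a set" where
  "lpart W = Inl -` W"

definition rpart :: "('a + 'b) set \<Rightarrow> 'b set" where
  "rpart W = Inr -` W"

lemma lpart_simps [simp]:
  "lpart {} = {}" "lpart (insert (Inl a) W) = insert a (lpart W)" "lpart (insert (Inr b) W) = lpart W"
  "lpart (V \<union> W) = lpart V \<union> lpart W" "lpart (V - W) = lpart V - lpart W"
  "lpart (Inl ` A) = A" "lpart (Inr ` B) = {}" "lpart (cat A B) = A"
  by (auto simp: lpart_def cat_def)

lemma rpart_simps [simp]: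
  "rpart {} = {}" "rpart (insert (Inr b) W) = insert b (rpart W)" "rpart (insert (Inl a) W) = rpart W"
  "rpart (V \<union> W) = rpart V \<union> rpart W" "rpart (V - W) = rpart V - rpart W"
  "rpart (Inr ` B) = B" "rpart (Inl ` A) = {}" "rpart (cat A B) = B"
  by (auto simp: rpart_def cat_def)

lemma parts_decomposition: "W = Inl ` lpart W \<union> Inr ` rpart W"
proof -
  have "x \<in> W \<longleftrightarrow> x \<in> Inl ` lpart W \<union> Inr ` rpart W" for x
    by (cases x) (auto simp: lpart_def rpart_def)
  then show ?thesis by blast
qed

lemma card_parts:
  fixes W :: "('a::finite + 'b::finite) set"
  shows "card W = card (lpart W) + card (rpart W)"
proof -
  have "card W = card (Inl ` lpart W \<union> Inr ` rpart W)"
    using parts_decomposition[of W] by simp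
  also have "\<dots> = card (lpart W) + card (rpart W)"
    by (subst card_Un_disjoint) (auto simp: card_image)
  finally show ?thesis .
qed

definition one_sided :: "('a + 'b) set \<Rightarrow> bool" where
  "one_sided B \<longleftrightarrow> (\<forall>p \<in> B. \<forall>q \<in> B. isl p = isl q)"

lemma parts_empty_iff:
  "lpart B = {} \<longleftrightarrow> (\<forall>p \<in> B. \<not> isl p)" "rpart B = {} \<longleftrightarrow> (\<forall>p \<in> B. isl p)"
proof -
  have "lpart B = {} \<longleftrightarrow> (\<forall>a. Inl a \<notin> B)" "rpart B = {} \<longleftrightarrow> (\<forall>b. Inr b \<notin> B)"
    by (simp_all add: lpart_def rpart_def vimage_def set_eq_iff)
  moreover have "(\<forall>a. Inl a \<notin> B) \<longleftrightarrow> (\<forall>p \<in> B. \<not> isl p)" "(\<forall>b. Inr b \<notin> B) \<longleftrightarrow> (\<forall>p \<in> B. isl p)"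
    by (metis sum.collapse(1) sum.disc(1), metis sum.collapse(2) sum.disc(2))
  ultimately show "lpart B = {} \<longleftrightarrow> (\<forall>p \<in> B. \<not> isl p)" "rpart B = {} \<longleftrightarrow> (\<forall>p \<in> B. isl p)"
    by simp_all
qed

lemma one_sided_iff_parts: "one_sided B \<longleftrightarrow> lpart B = {} \<or> rpart B = {}"
  unfolding one_sided_def parts_empty_iff by blast

lemma mem_S_tau_iff:
  assumes "\<tau> vzero = vzero"
  shows "W \<in> S_tau \<tau> \<longleftrightarrow>
    even (card (lpart W)) \<and> even (card (rpart W)) \<and> vsum (rpart W) = \<tau> (vsum (lpart W))"
    (is "_ \<longleftrightarrow> ?even_halves \<and> ?syndromes")
proof
  assume "W \<in> S_tau \<tau>"
  then obtain a X Y where "W = cat (flip (flip X a) vzero) (flip (flip Y (\<tau> a)) (\<tau> vzero))"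
    and "X \<in> ext_hamming" "Y \<in> ext_hamming"
    unfolding S_tau_def by auto
  then show "?even_halves \<and> ?syndromes"
    using assms by (simp add: vsum_flip even_card_flip ext_hamming_def)
next
  assume W: "?even_halves \<and> ?syndromes"
  define a where "a = vsum (lpart W)"
  define X where "X = flip (flip (lpart W) vzero) a"
  define Y where "Y = flip (flip (rpart W) vzero) (\<tau> a)"
  have "X \<in> ext_hamming" "Y \<in> ext_hamming"
    using W by (simp_all add: X_def Y_def a_def ext_hamming_def vsum_flip even_card_flip)
  moreover have "W = cat (flip (flip X a) vzero) (flip (flip Y (\<tau> a)) (\<tau> vzero))"
    unfolding X_def Y_def assms flip_flip cat_def by (rule parts_decomposition)
  ultimately have "W \<in> {cat (flip (flip X a) vzero) (flip (flip Y (\<tau> a)) (\<tau> vzero)) | X Y.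
      X \<in> ext_hamming \<and> Y \<in> ext_hamming}"
    by blast
  then show "W \<in> S_tau \<tau>"
    unfolding S_tau_def by (rule UN_I[where a = a, OF UNIV_I])
qed

section \<open>Stabilizers and closing pairs\<close>

abbreviation stabilizes :: "('p \<Rightarrow> 'p) \<Rightarrow> 'p set set \<Rightarrow> bool" where
  "stabilizes \<pi> D \<equiv> (\<lambda>Y. \<pi> ` Y) ` D = D"

lemma image_mem_iff_if_stabilizes:
  assumes "bij \<pi>" "stabilizes \<pi> D"
  shows "\<pi> ` A \<in> D \<longleftrightarrow> A \<in> D"
proof -
  have "inj (\<lambda>Y. \<pi> ` Y)"
    using assms(1) by (simp add: bij_is_inj inj_on_image)
  then have "\<pi> ` A \<in> (\<lambda>Y. \<pi> ` Y) ` D \<longleftrightarrow> A \<in> D"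
    by (rule inj_image_mem_iff)
  then show ?thesis
    using assms(2) by simp
qed

lemma stabilizes_card_restriction:
  assumes "bij \<pi>" "stabilizes \<pi> D"
  shows "stabilizes \<pi> {B \<in> D. card B = k}" (is "stabilizes \<pi> ?E")
proof (intro Set.set_eqI iffI)
  have "card (\<pi> ` A) = card A" for A
    by (rule card_image[OF inj_on_subset[OF bij_is_inj[OF assms(1)] subset_UNIV]])
  then have mem: "\<pi> ` A \<in> ?E \<longleftrightarrow> A \<in> ?E" for A
    using image_mem_iff_if_stabilizes[OF assms] by simp
  fix X
  show "X \<in> ?E" if "X \<in> (\<lambda>Y. \<pi> ` Y) ` ?E"
    using that mem by (elim imageE) simp
  show "X \<in> (\<lambda>Y. \<pi> ` Y) ` ?E" if "X \<in> ?E"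
  proof (rule image_eqI)
    have X: "\<pi> ` (\<pi> -` X) = X"
      using assms(1) by (simp add: bij_is_surj surj_image_vimage_eq)
    then show "X = \<pi> ` (\<pi> -` X)" ..
    show "\<pi> -` X \<in> ?E"
      using mem[of "\<pi> -` X", unfolded X] that ..
  qed
qed

lemma stab_group_cong:
  assumes "\<And>\<pi>. bij \<pi> \<Longrightarrow> stabilizes \<pi> B \<longleftrightarrow> stabilizes \<pi> C"
  shows "stab_group B = stab_group C"
proof -
  have "\<pi> \<in> Bij UNIV \<longleftrightarrow> bij \<pi>" for \<pi> :: "'a \<Rightarrow> 'a"
    by (simp add: Bij_def extensional_def)
  then have "{\<pi> \<in> Bij UNIV. stabilizes \<pi> B} = {\<pi> \<in> Bij UNIV. stabilizes \<pi> C}"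
    using assms by (intro Collect_cong) metis
  then show ?thesis
    by (simp add: stab_group_def)
qed

definition closing_pair :: "'p set set \<Rightarrow> 'p \<Rightarrow> 'p \<Rightarrow> bool" where
  "closing_pair D p q \<longleftrightarrow> (\<forall>s t s' t'. {p, q, s, t} \<in> D \<longrightarrow> {p, q, s', t'} \<in> D \<longrightarrow>
     distinct [s, t, s', t'] \<longrightarrow> {s, t, s', t'} \<in> D)"

lemma closing_pair_commute: "closing_pair D p q \<longleftrightarrow> closing_pair D q p"
  unfolding closing_pair_def insert_commute[of p q] ..

lemma closing_pair_image:
  assumes "bij \<pi>" "stabilizes \<pi> D" "closing_pair D p q"
  shows "closing_pair D (\<pi> p) (\<pi> q)"
  unfolding closing_pair_def
proof (intro allI impI)
  fix s t s' t'
  assume "{\<pi> p, \<pi> q, s, t} \<in> D" "{\<pi> p, \<pi> q, s', t'} \<in> D" "distinct [s, t, s', t']"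
  define \<sigma> where "\<sigma> = inv_into UNIV \<pi>"
  have \<pi>\<sigma>: "\<pi> (\<sigma> x) = x" for x
    using assms(1) by (simp add: \<sigma>_def bij_is_surj surj_f_inv_f)
  have "inj \<sigma>"
    using assms(1) by (simp add: \<sigma>_def bij_imp_bij_inv bij_is_inj)
  have "\<pi> ` {p, q, \<sigma> s, \<sigma> t} \<in> D" "\<pi> ` {p, q, \<sigma> s', \<sigma> t'} \<in> D"
    using \<open>{\<pi> p, \<pi> q, s, t} \<in> D\<close> \<open>{\<pi> p, \<pi> q, s', t'} \<in> D\<close> by (simp_all add: \<pi>\<sigma>)
  then have "{p, q, \<sigma> s, \<sigma> t} \<in> D" "{p, q, \<sigma> s', \<sigma> t'} \<in> D"
    using image_mem_iff_if_stabilizes[OF assms(1,2)] by blast+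
  moreover have "distinct [\<sigma> s, \<sigma> t, \<sigma> s', \<sigma> t']"
    using \<open>distinct [s, t, s', t']\<close> \<open>inj \<sigma>\<close> by (simp add: inj_eq)
  ultimately have "{\<sigma> s, \<sigma> t, \<sigma> s', \<sigma> t'} \<in> D"
    using assms(3) unfolding closing_pair_def by blast
  then have "\<pi> ` {\<sigma> s, \<sigma> t, \<sigma> s', \<sigma> t'} \<in> D"
    using image_mem_iff_if_stabilizes[OF assms(1,2)] by blast
  then show "{s, t, s', t'} \<in> D"
    by (simp add: \<pi>\<sigma>)
qed

section \<open>The code and its quadruple system\<close>

locale zero_fixing_perm =
  fixes \<tau> :: "('r::finite) vec \<Rightarrow> 'r vec"
  assumes bij_tau: "bij \<tau>" and tau_vzero [simp]: "\<tau> vzero = vzero"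
begin

lemma tau_eq_iff [simp]: "\<tau> x = \<tau> y \<longleftrightarrow> x = y"
  using bij_tau by (simp add: bij_is_inj inj_eq)

lemma tau_eq_vzero_iff [simp]: "\<tau> x = vzero \<longleftrightarrow> x = vzero" "vzero = \<tau> x \<longleftrightarrow> x = vzero"
  by (metis tau_eq_iff tau_vzero)+

lemmas mem_S_tau = mem_S_tau_iff[where \<tau> = \<tau>, OF tau_vzero]

lemma SQS_tau_subset: "SQS_tau \<tau> \<subseteq> {B \<in> S_tau \<tau>. card B = 4}"
proof
  fix B assume "B \<in> SQS_tau \<tau>"
  moreover have "a \<noteq> c" if "\<tau> (vadd a c) = vadd b d" "b \<noteq> d" for a b c d
    using that by (metis tau_vzero vadd_self vzero_eq_vadd_iff)
  ultimately show "B \<in> {B \<in> S_tau \<tau>. card B = 4}"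
    by (auto simp: SQS_tau_def mem_S_tau card_parts vsum_insert vadd_ac)
qed

lemma mem_SQS_tau_if_card_4:
  assumes "B \<in> S_tau \<tau>" "card B = 4"
  shows "B \<in> SQS_tau \<tau>"
proof -
  have L: "even (card (lpart B))" and R: "even (card (rpart B))"
    and LR: "vsum (rpart B) = \<tau> (vsum (lpart B))" and card: "card (lpart B) + card (rpart B) = 4"
    using assms by (auto simp: mem_S_tau card_parts)
  have B: "B = Inl ` lpart B \<union> Inr ` rpart B"
    by (rule parts_decomposition)
  have "card (lpart B) = 4 \<and> card (rpart B) = 0 \<or> card (lpart B) = 0 \<and> card (rpart B) = 4
    \<or> card (lpart B) = 2 \<and> card (rpart B) = 2"
    using L R card by presburger
  then consider "card (lpart B) = 4" "rpart B = {}" | "lpart B = {}" "card (rpart B) = 4"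
    | "card (lpart B) = 2" "card (rpart B) = 2"
    by force
  then show ?thesis
  proof cases
    case 1
    then obtain a b c d where "lpart B = {a, b, c, d}" "distinct [a, b, c, d]"
      by (auto simp: card_4_iff)
    moreover have "vsum (lpart B) = vzero" using LR 1 by simp
    ultimately have "B = Inl ` {a, b, c, d} \<and> distinct [a, b, c, d]
        \<and> vadd (vadd a b) (vadd c d) = vzero"
      using B 1 by (simp add: vsum_insert vadd_ac)
    then show ?thesis
      unfolding SQS_tau_def by (intro UnI1 CollectI) blast
  next
    case 2
    then obtain a b c d where "rpart B = {a, b, c, d}" "distinct [a, b, c, d]"
      by (auto simp: card_4_iff)
    moreover have "vsum (rpart B) = vzero" using LR 2 by simp
    ultimately have "B = Inr ` {a, b, c, d} \<and> distinct [a, b, c, d]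
        \<and> vadd (vadd a b) (vadd c d) = vzero"
      using B 2 by (simp add: vsum_insert vadd_ac)
    then show ?thesis
      unfolding SQS_tau_def by (intro UnI1 UnI2 CollectI) blast
  next
    case 3
    then obtain a c b d where "lpart B = {a, c}" "a \<noteq> c" "rpart B = {b, d}" "b \<noteq> d"
      by (auto simp: card_2_iff)
    then have "B = Inl ` {a, c} \<union> Inr ` {b, d} \<and> \<tau> (vadd a c) = vadd b d \<and> vadd b d \<noteq> vzero"
      using B LR by (simp add: vsum_doubleton)
    then show ?thesis
      unfolding SQS_tau_def by (intro UnI2 CollectI) blast
  qed
qed

lemma SQS_tau_eq: "SQS_tau \<tau> = {B \<in> S_tau \<tau>. card B = 4}"
  using SQS_tau_subset mem_SQS_tau_if_card_4 by blast

lemma sym_diff_mem_S_tau: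
  assumes "V \<in> S_tau \<tau>" "B \<in> S_tau \<tau>"
    and "\<tau> (vadd (vsum (lpart V)) (vsum (lpart B))) = vadd (\<tau> (vsum (lpart V))) (\<tau> (vsum (lpart B)))"
  shows "sym_diff V B \<in> S_tau \<tau>"
  using assms by (simp add: mem_S_tau even_card_sym_diff vsum_sym_diff)

lemma vsum_lpart_one_sided:
  assumes "B \<in> S_tau \<tau>" "one_sided B"
  shows "vsum (lpart B) = vzero"
  using assms by (auto simp: mem_S_tau one_sided_iff_parts)

lemma sym_diff_one_sided_mem_S_tau:
  assumes "V \<in> S_tau \<tau>" "B \<in> S_tau \<tau>" "one_sided B"
  shows "sym_diff V B \<in> S_tau \<tau>"
  using assms by (intro sym_diff_mem_S_tau) (simp_all add: vsum_lpart_one_sided)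

lemma block_shape:
  assumes "B \<in> SQS_tau \<tau>"
  shows "one_sided B \<or> card (lpart B) = 2 \<and> card (rpart B) = 2"
proof -
  have "even (card (lpart B))" "even (card (rpart B))" "card (lpart B) + card (rpart B) = 4"
    using assms by (auto simp: SQS_tau_eq mem_S_tau card_parts)
  then have "card (lpart B) = 0 \<or> card (rpart B) = 0 \<or> card (lpart B) = 2 \<and> card (rpart B) = 2"
    by presburger
  then show ?thesis
    by (auto simp: one_sided_iff_parts)
qed

lemma small_word_in_S_tau:
  assumes "W \<in> S_tau \<tau>" "card (lpart W) < 3" "card (rpart W) < 3"
  shows "W = {} \<or> card W = 4"
proof -
  have L: "even (card (lpart W))" and R: "even (card (rpart W))"
    and LR: "vsum (rpart W) = \<tau> (vsum (lpart W))"
    using assms(1) by (auto simp: mem_S_tau)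
  then have "lpart W = {} \<longleftrightarrow> rpart W = {}"
    using assms(2,3) vsum_eq_vzero_iff_empty[of "lpart W"] vsum_eq_vzero_iff_empty[of "rpart W"]
    by auto
  then consider "lpart W = {}" "rpart W = {}" | "card (lpart W) \<noteq> 0" "card (rpart W) \<noteq> 0"
    by force
  then show ?thesis
  proof cases
    case 1
    then show ?thesis
      using parts_decomposition[of W] by simp
  next
    case 2
    then have "card (lpart W) = 2" "card (rpart W) = 2"
      using L R assms(2,3) by presburger+
    then show ?thesis
      by (simp add: card_parts)
  qed
qed

lemma exists_reducing_quadruple:
  fixes h :: "'r vec \<Rightarrow> 'p"
  assumes "inj h" "finite W" "3 \<le> card (h -` W)"
  obtains Q where "card Q = 4" "vsum Q = vzero" "card (sym_diff W (h ` Q)) < card W"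
proof -
  obtain Q where Q: "card Q = 4" "vsum Q = vzero" "3 \<le> card (h -` W \<inter> Q)"
    using assms(3) by (rule exists_zero_sum_quadruple)
  have "W \<inter> h ` Q = h ` (h -` W \<inter> Q)"
    by blast
  then have "card (sym_diff W (h ` Q)) < card W"
    using Q assms(1,2) by (intro card_sym_diff_less) (simp_all add: card_image inj_on_subset)
  with Q show thesis
    by (intro that)
qed

lemma exists_reducing_one_sided_block:
  assumes "W \<in> S_tau \<tau>" "W \<noteq> {}" "card W \<noteq> 4"
  obtains B where "B \<in> SQS_tau \<tau>" "one_sided B" "card (sym_diff W B) < card W"
proof -
  have block: "Inl ` Q \<in> SQS_tau \<tau>" "Inr ` Q \<in> SQS_tau \<tau>" if "card Q = 4" "vsum Q = vzero" for Q
    using that by (simp_all add: SQS_tau_eq mem_S_tau card_image)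
  have "3 \<le> card (Inl -` W) \<or> 3 \<le> card (Inr -` W)"
    using small_word_in_S_tau assms unfolding lpart_def rpart_def by force
  then show thesis
  proof
    assume "3 \<le> card (Inl -` W)"
    then obtain Q where "card Q = 4" "vsum Q = vzero" "card (sym_diff W (Inl ` Q)) < card W"
      by (rule exists_reducing_quadruple[rotated 2]) simp_all
    then show thesis
      using block by (intro that) (simp_all add: one_sided_iff_parts)
  next
    assume "3 \<le> card (Inr -` W)"
    then obtain Q where "card Q = 4" "vsum Q = vzero" "card (sym_diff W (Inr ` Q)) < card W"
      by (rule exists_reducing_quadruple[rotated 2]) simp_all
    then show thesis
      using block by (intro that) (simp_all add: one_sided_iff_parts)
  qed
qed

lemma sym_diff_blocks_mem_S_tau:
  assumes B: "B \<in> SQS_tau \<tau>" "B' \<in> SQS_tau \<tau>"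
    and pq: "p \<in> B" "q \<in> B" "p \<in> B'" "q \<in> B'" "p \<noteq> q" "isl p = isl q"
  shows "sym_diff B B' \<in> S_tau \<tau>"
proof -
  have S: "B \<in> S_tau \<tau>" "B' \<in> S_tau \<tau>"
    using B by (simp_all add: SQS_tau_eq)
  consider "one_sided B" | "one_sided B'"
    | "card (lpart B) = 2" "card (lpart B') = 2" "card (rpart B) = 2" "card (rpart B') = 2"
    using block_shape[OF B(1)] block_shape[OF B(2)] by blast
  then show ?thesis
  proof cases
    case 1
    then have "sym_diff B' B \<in> S_tau \<tau>"
      using S by (intro sym_diff_one_sided_mem_S_tau)
    then show ?thesis
      by (simp only: Un_commute)
  next
    case 2
    then show ?thesis
      using S by (intro sym_diff_one_sided_mem_S_tau)
  next
    case 3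
    \<comment> \<open>Both blocks meet the half containing p and q exactly in {p, q}.\<close>
    have "lpart B = lpart B' \<or> rpart B = rpart B'"
    proof (cases p; cases q)
      fix a c assume "p = Inl a" "q = Inl c"
      then have "lpart B = {a, c}" "lpart B' = {a, c}"
        using pq 3 by (simp_all add: doubleton_eq_if_card_2 lpart_def)
      then show ?thesis by simp
    next
      fix b d assume "p = Inr b" "q = Inr d"
      then have "rpart B = {b, d}" "rpart B' = {b, d}"
        using pq 3 by (simp_all add: doubleton_eq_if_card_2 rpart_def)
      then show ?thesis by simp
    qed (use pq in simp_all)
    then have "vsum (lpart B) = vsum (lpart B')"
      using S by (auto simp: mem_S_tau)
    then show ?thesis
      using S by (intro sym_diff_mem_S_tau) simp_all
  qed
qed

lemma same_side_closing_pair: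
  assumes "isl p = isl q"
  shows "closing_pair (SQS_tau \<tau>) p q"
  unfolding closing_pair_def
proof (intro allI impI)
  fix s t s' t'
  assume B: "{p, q, s, t} \<in> SQS_tau \<tau>" "{p, q, s', t'} \<in> SQS_tau \<tau>"
    and st: "distinct [s, t, s', t']"
  then have "distinct [p, q, s, t]" "distinct [p, q, s', t']"
    by (simp_all only: SQS_tau_eq mem_Collect_eq card_insert4_eq_4_iff)
  then have "{s, t, s', t'} = sym_diff {p, q, s, t} {p, q, s', t'}"
    using st by auto
  moreover have "sym_diff {p, q, s, t} {p, q, s', t'} \<in> S_tau \<tau>"
    using B \<open>distinct [p, q, s, t]\<close> assms by (intro sym_diff_blocks_mem_S_tau[of _ _ p q]) auto
  moreover have "card {s, t, s', t'} = 4"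
    using st by (simp only: card_insert4_eq_4_iff)
  ultimately show "{s, t, s', t'} \<in> SQS_tau \<tau>"
    by (simp only: SQS_tau_eq mem_Collect_eq)
qed

lemma cross_pair_not_closing:
  assumes "\<not> vadditive \<tau>"
  shows "\<not> closing_pair (SQS_tau \<tau>) (Inl a) (Inr b)"
proof
  assume closing: "closing_pair (SQS_tau \<tau>) (Inl a) (Inr b)"
  obtain v w where vw: "\<tau> (vadd v w) \<noteq> vadd (\<tau> v) (\<tau> w)"
    using assms unfolding vadditive_def by blast
  then have "v \<noteq> vzero" "w \<noteq> vzero" "v \<noteq> w"
    by auto
  have block: "{Inl a, Inr b, Inl (vadd a u), Inr (vadd b (\<tau> u))} \<in> SQS_tau \<tau>"
    if "u \<noteq> vzero" for u
    using that by (simp add: SQS_tau_eq mem_S_tau card_parts vsum_doubleton)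
  \<comment> \<open>Closing would make the remaining four points of the blocks for u = v and u = w a block,
    which says exactly that tau is additive at v and w.\<close>
  let ?Q = "{Inl (vadd a v), Inr (vadd b (\<tau> v)), Inl (vadd a w), Inr (vadd b (\<tau> w))}"
  have "distinct [Inl (vadd a v), Inr (vadd b (\<tau> v)), Inl (vadd a w), Inr (vadd b (\<tau> w))]"
    using \<open>v \<noteq> w\<close> by simp
  then have "?Q \<in> SQS_tau \<tau>"
    by (rule closing[unfolded closing_pair_def, rule_format,
        OF block[OF \<open>v \<noteq> vzero\<close>] block[OF \<open>w \<noteq> vzero\<close>]])
  then have "vadd (vadd b (\<tau> v)) (vadd b (\<tau> w)) = \<tau> (vadd (vadd a v) (vadd a w))"
    using \<open>v \<noteq> w\<close> by (simp add: SQS_tau_eq mem_S_tau vsum_doubleton)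
  then show False
    using vw by (simp add: vadd_ac)
qed

lemma automorphism_preserves_sides:
  assumes "\<not> vadditive \<tau>" "bij \<pi>" "stabilizes \<pi> (SQS_tau \<tau>)" "isl p = isl q"
  shows "isl (\<pi> p) = isl (\<pi> q)"
proof (rule ccontr)
  assume sides: "isl (\<pi> p) \<noteq> isl (\<pi> q)"
  have closing: "closing_pair (SQS_tau \<tau>) (\<pi> p) (\<pi> q)"
    by (rule closing_pair_image[OF assms(2,3) same_side_closing_pair[OF assms(4)]])
  then have closing': "closing_pair (SQS_tau \<tau>) (\<pi> q) (\<pi> p)"
    by (rule closing_pair_commute[THEN iffD1])
  show False
  proof (cases "\<pi> p")
    case (Inl a)
    moreover obtain b where "\<pi> q = Inr b"
      using sides Inl by (cases "\<pi> q") simp_all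
    ultimately show False
      using closing cross_pair_not_closing[OF assms(1)] by simp
  next
    case (Inr b)
    moreover obtain a where "\<pi> q = Inl a"
      using sides Inr by (cases "\<pi> q") simp_all
    ultimately show False
      using closing' cross_pair_not_closing[OF assms(1)] by simp
  qed
qed

lemma one_sided_image:
  assumes "\<not> vadditive \<tau>" "bij \<pi>" "stabilizes \<pi> (SQS_tau \<tau>)" "one_sided B"
  shows "one_sided (\<pi> ` B)"
  unfolding one_sided_def
proof (intro ballI)
  fix x y assume "x \<in> \<pi> ` B" "y \<in> \<pi> ` B"
  then obtain p q where "p \<in> B" "q \<in> B" "x = \<pi> p" "y = \<pi> q"
    by blast
  moreover have "isl p = isl q"
    using assms(4) \<open>p \<in> B\<close> \<open>q \<in> B\<close> unfolding one_sided_def by blast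
  then have "isl (\<pi> p) = isl (\<pi> q)"
    by (rule automorphism_preserves_sides[OF assms(1-3)])
  ultimately show "isl x = isl y"
    by simp
qed

lemma sym_diff_image_block_mem_S_tau:
  assumes "bij \<pi>" "stabilizes \<pi> (SQS_tau \<tau>)" "B \<in> SQS_tau \<tau>" "one_sided B" "V \<in> S_tau \<tau>"
  shows "sym_diff V (\<pi> ` B) \<in> S_tau \<tau>"
proof -
  have "\<pi> ` B \<in> SQS_tau \<tau>"
    using assms(3) image_mem_iff_if_stabilizes[OF assms(1,2)] by blast
  then have "\<pi> ` B \<in> S_tau \<tau>"
    by (simp add: SQS_tau_eq)
  show ?thesis
  proof (cases "vadditive \<tau>")
    case True
    then show ?thesis
      using assms(5) \<open>\<pi> ` B \<in> S_tau \<tau>\<close> by (intro sym_diff_mem_S_tau) (simp_all add: vadditive_def)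
  next
    case False
    then have "one_sided (\<pi> ` B)"
      using assms(1,2,4) by (rule one_sided_image)
    with assms(5) \<open>\<pi> ` B \<in> S_tau \<tau>\<close> show ?thesis
      by (rule sym_diff_one_sided_mem_S_tau)
  qed
qed

lemma image_mem_S_tau:
  assumes "bij \<pi>" "stabilizes \<pi> (SQS_tau \<tau>)" "W \<in> S_tau \<tau>"
  shows "\<pi> ` W \<in> S_tau \<tau>"
  using assms(3)
proof (induction "card W" arbitrary: W rule: less_induct)
  case less
  consider "W = {}" | "card W = 4"
    | B where "B \<in> SQS_tau \<tau>" "one_sided B" "card (sym_diff W B) < card W"
    using exists_reducing_one_sided_block[OF less.prems] by blast
  then show ?case
  proof cases
    case 1
    then show ?thesis by (simp add: mem_S_tau)
  next
    case 2
    then have "W \<in> SQS_tau \<tau>"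
      using less.prems by (simp add: SQS_tau_eq)
    then have "\<pi> ` W \<in> SQS_tau \<tau>"
      using image_mem_iff_if_stabilizes[OF assms(1,2)] by blast
    then show ?thesis
      by (simp add: SQS_tau_eq)
  next
    case (3 B)
    have "B \<in> S_tau \<tau>"
      using \<open>B \<in> SQS_tau \<tau>\<close> by (simp add: SQS_tau_eq)
    then have "sym_diff W B \<in> S_tau \<tau>"
      using less.prems \<open>one_sided B\<close> by (intro sym_diff_one_sided_mem_S_tau)
    then have "\<pi> ` sym_diff W B \<in> S_tau \<tau>"
      using 3 by (intro less.hyps)
    then have "sym_diff (\<pi> ` sym_diff W B) (\<pi> ` B) \<in> S_tau \<tau>"
      using assms(1,2) 3 by (intro sym_diff_image_block_mem_S_tau)
    moreover have "\<pi> ` sym_diff W B = sym_diff (\<pi> ` W) (\<pi> ` B)"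
      using bij_is_inj[OF assms(1)] by (simp add: image_Un image_set_diff)
    then have "sym_diff (\<pi> ` sym_diff W B) (\<pi> ` B) = \<pi> ` W"
      by blast
    ultimately show ?thesis
      by simp
  qed
qed

lemma stabilizes_S_tau_iff_SQS_tau:
  assumes "bij \<pi>"
  shows "stabilizes \<pi> (S_tau \<tau>) \<longleftrightarrow> stabilizes \<pi> (SQS_tau \<tau>)"
proof
  assume "stabilizes \<pi> (S_tau \<tau>)"
  then show "stabilizes \<pi> (SQS_tau \<tau>)"
    unfolding SQS_tau_eq using assms by (intro stabilizes_card_restriction)
next
  assume "stabilizes \<pi> (SQS_tau \<tau>)"
  then have "(\<lambda>Y. \<pi> ` Y) ` S_tau \<tau> \<subseteq> S_tau \<tau>"
    using assms image_mem_S_tau by blast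
  moreover have "inj (\<lambda>Y. \<pi> ` Y)"
    using assms by (simp add: bij_is_inj inj_on_image)
  then have "inj_on (\<lambda>Y. \<pi> ` Y) (S_tau \<tau>)"
    by (rule inj_on_subset) simp
  ultimately show "stabilizes \<pi> (S_tau \<tau>)"
    by (intro endo_inj_surj) simp_all
qed

end

theorem corollary2:
  fixes \<tau> :: "('r::finite) vec \<Rightarrow> 'r vec"
  assumes "bij \<tau>" and "\<tau> vzero = vzero"
  shows "PAut (S_tau \<tau>) \<cong> Aut_design (SQS_tau \<tau>)"
proof -
  interpret zero_fixing_perm \<tau>
    using assms by unfold_locales
  have "PAut (S_tau \<tau>) = Aut_design (SQS_tau \<tau>)"
    unfolding PAut_def Aut_design_def
    by (intro stab_group_cong stabilizes_S_tau_iff_SQS_tau)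
  then show ?thesis
    by simp
qed

end
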